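(* Let $\omega=\{\omega_n\}_{n\ge 0}$ be a valid weight, let $a\in\mathbb{C}\setminus\{0\}$, and let $V_a=M_{a-z}^*M_{a-z}$ act on $H^2_\omega$. For each $\lambda\in\sigma_{\mathrm p}(V_a)$, every associated eigenfunction $h(z)=\sum_{n\ge0}h_nz^n\in H^2_\omega$ (i.e. $h\neq 0$ with $V_ah=\lambda h$) has Taylor coefficients satisfying \[ |a|^2h_n - a h_{n+1}\frac{\omega_{n+1}}{\omega_n} - \overline{a}\,h_{n-1} + h_n\frac{\omega_{n+1}}{\omega_n}=\lambda h_n\qquad\text{for each } n\ge 0, \] with the convention $h_{-1}=0$; this recurrence relation has a unique solution up to normalization (i.e. up to multiplication by a scalar), and the eigenfunction is given by it.
   Context: A weight $\omega=\{\omega_n\}_{n\ge0}$ is called valid if it is a monotonic sequence of positive numbers with $\omega_0=1$, $\lim_{n\to\infty}\omega_{n+1}/\omega_n=1$ and $\sum_{n=0}^\infty(1-\omega_{n+1}/\omega_n)^2<\infty$. The weighted Hardy space $H^2_\omega$ is the Hilbert space of holomorphic functions $f(z)=\sum_{n\ge0}a_nz^n$ on the unit disc $\mathbb{D}$ with $\|f\|_\omega^2=\sum_{n\ge0}|a_n|^2\omega_n<\infty$, with inner product $\langle f,g\rangle=\sum_n a_n\overline{b_n}\omega_n$. For a polynomial $\varphi$, $M_\varphi$ denotes the (bounded) operator of multiplication by $\varphi$ on $H^2_\omega$ and $M_\varphi^*$ its Hilbert space adjoint. $\sigma_{\mathrm p}$ denotes the point spectrum (set of eigenvalues). *)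

theory Defs
  imports "HOL-Analysis.Analysis"
begin

text \<open>Functions in the weighted Hardy space are represented by their Taylor
  coefficient sequences h :: nat \<Rightarrow> complex, f(z) = sum of h n * z^n.\<close>

definition valid_weight :: "(nat \<Rightarrow> real) \<Rightarrow> bool" where
  "valid_weight \<omega> \<longleftrightarrow>
     (mono \<omega> \<or> antimono \<omega>) \<and> (\<forall>n. \<omega> n > 0) \<and> \<omega> 0 = 1 \<and>
     (\<lambda>n. \<omega> (Suc n) / \<omega> n) \<longlonglongrightarrow> 1 \<and>
     summable (\<lambda>n. (1 - \<omega> (Suc n) / \<omega> n)\<^sup>2)"

definition in_H2 :: "(nat \<Rightarrow> real) \<Rightarrow> (nat \<Rightarrow> complex) \<Rightarrow> bool" where
  "in_H2 \<omega> h \<longleftrightarrow> summable (\<lambda>n. (cmod (h n))\<^sup>2 * \<omega> n)"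

definition winner :: "(nat \<Rightarrow> real) \<Rightarrow> (nat \<Rightarrow> complex) \<Rightarrow> (nat \<Rightarrow> complex) \<Rightarrow> complex" where
  "winner \<omega> f g = (\<Sum>n. f n * cnj (g n) * complex_of_real (\<omega> n))"

definition mult_az :: "complex \<Rightarrow> (nat \<Rightarrow> complex) \<Rightarrow> (nat \<Rightarrow> complex)" where
  "mult_az a h = (\<lambda>n. a * h n - (if n = 0 then 0 else h (n - 1)))"

definition mult_az_adj :: "(nat \<Rightarrow> real) \<Rightarrow> complex \<Rightarrow> (nat \<Rightarrow> complex) \<Rightarrow> (nat \<Rightarrow> complex)" where
  "mult_az_adj \<omega> a u = (THE v. in_H2 \<omega> v \<and>
      (\<forall>f. in_H2 \<omega> f \<longrightarrow> winner \<omega> (mult_az a f) u = winner \<omega> f v))"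

definition V_op :: "(nat \<Rightarrow> real) \<Rightarrow> complex \<Rightarrow> (nat \<Rightarrow> complex) \<Rightarrow> (nat \<Rightarrow> complex)" where
  "V_op \<omega> a h = mult_az_adj \<omega> a (mult_az a h)"

definition point_spectrum_V :: "(nat \<Rightarrow> real) \<Rightarrow> complex \<Rightarrow> complex set" where
  "point_spectrum_V \<omega> a = {lam. \<exists>h. in_H2 \<omega> h \<and> h \<noteq> (\<lambda>_. 0) \<and> V_op \<omega> a h = (\<lambda>n. lam * h n)}"

definition eig_rec :: "(nat \<Rightarrow> real) \<Rightarrow> complex \<Rightarrow> complex \<Rightarrow> (nat \<Rightarrow> complex) \<Rightarrow> nat \<Rightarrow> bool" where
  "eig_rec \<omega> a lam h n \<longleftrightarrow>
     complex_of_real ((cmod a)\<^sup>2) * h n - a * h (Suc n) * complex_of_real (\<omega> (Suc n) / \<omega> n)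
       - cnj a * (if n = 0 then 0 else h (n - 1))
       + h n * complex_of_real (\<omega> (Suc n) / \<omega> n) = lam * h n"

end

theory Submission
  imports Defs
begin

(* Write M_{a-z} = a - M_z. The adjoint of M_z on H^2_omega is the weighted backward shift
   (S u)_n = u_{n+1} omega_{n+1} / omega_n, which is bounded because the ratios omega_{n+1} / omega_n
   converge. Hence V_a h = conj a (a h - z h) - S (a h - z h), and comparing Taylor coefficients in
   V_a h = lam h gives the three-term recurrence. Since a /= 0 it determines h_{n+1} from h_n and
   h_{n-1}, so a solution is fixed by its value at 0: an eigenfunction has h_0 /= 0, and every
   solution k equals (k_0 / h_0) h. *)

definition mult_z :: "(nat \<Rightarrow> complex) \<Rightarrow> nat \<Rightarrow> complex" where
  "mult_z f n = (if n = 0 then 0 else f (n - 1))"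

definition mult_z_adj :: "(nat \<Rightarrow> real) \<Rightarrow> (nat \<Rightarrow> complex) \<Rightarrow> nat \<Rightarrow> complex" where
  "mult_z_adj \<omega> u n = u (Suc n) * complex_of_real (\<omega> (Suc n) / \<omega> n)"

lemma mult_az_eq: "mult_az a f = (\<lambda>n. a * f n - mult_z f n)"
  by (simp add: mult_az_def mult_z_def)

lemma in_H2_cmult: "in_H2 \<omega> f \<Longrightarrow> in_H2 \<omega> (\<lambda>n. c * f n)"
  unfolding in_H2_def by (simp add: norm_mult power_mult_distrib mult.assoc summable_mult)

lemma in_H2_add:
  assumes "\<And>n. \<omega> n \<ge> 0" and "in_H2 \<omega> f" and "in_H2 \<omega> g"
  shows "in_H2 \<omega> (\<lambda>n. f n + g n)"
proof -
  have "norm ((cmod (f n + g n))\<^sup>2 * \<omega> n) \<le> 2 * ((cmod (f n))\<^sup>2 * \<omega> n) + 2 * ((cmod (g n))\<^sup>2 * \<omega> n)" for n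
  proof -
    have "0 \<le> (cmod (f n) - cmod (g n))\<^sup>2"
      by simp
    then have "(cmod (f n) + cmod (g n))\<^sup>2 \<le> 2 * (cmod (f n))\<^sup>2 + 2 * (cmod (g n))\<^sup>2"
      unfolding power2_sum power2_diff by linarith
    then have "(cmod (f n + g n))\<^sup>2 \<le> 2 * (cmod (f n))\<^sup>2 + 2 * (cmod (g n))\<^sup>2"
      by (smt (verit) norm_ge_zero norm_triangle_ineq power_mono)
    from mult_right_mono[OF this assms(1)] show ?thesis
      using assms(1)[of n] by (simp add: algebra_simps)
  qed
  moreover have "summable (\<lambda>n. 2 * ((cmod (f n))\<^sup>2 * \<omega> n) + 2 * ((cmod (g n))\<^sup>2 * \<omega> n))"
    using assms(2,3) unfolding in_H2_def by (intro summable_add summable_mult)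
  ultimately show ?thesis
    unfolding in_H2_def by (blast intro: summable_comparison_test')
qed

lemma in_H2_diff:
  assumes "\<And>n. \<omega> n \<ge> 0" and "in_H2 \<omega> f" and "in_H2 \<omega> g"
  shows "in_H2 \<omega> (\<lambda>n. f n - g n)"
  using in_H2_add[OF assms(1,2) in_H2_cmult[OF assms(3), of "-1"]] by simp

lemma summable_winner:
  assumes "\<And>n. \<omega> n \<ge> 0" and "in_H2 \<omega> f" and "in_H2 \<omega> g"
  shows "summable (\<lambda>n. f n * cnj (g n) * complex_of_real (\<omega> n))"
proof (rule summable_norm_cancel)
  have "norm (norm (f n * cnj (g n) * complex_of_real (\<omega> n))) \<le> (cmod (f n))\<^sup>2 * \<omega> n + (cmod (g n))\<^sup>2 * \<omega> n" for n
  proof -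
    have "0 \<le> (cmod (f n) - cmod (g n))\<^sup>2" and "0 \<le> cmod (f n) * cmod (g n)"
      by simp_all
    then have "cmod (f n) * cmod (g n) \<le> (cmod (f n))\<^sup>2 + (cmod (g n))\<^sup>2"
      unfolding power2_diff by linarith
    from mult_right_mono[OF this assms(1)] show ?thesis
      using assms(1)[of n] by (simp add: norm_mult distrib_right)
  qed
  moreover have "summable (\<lambda>n. (cmod (f n))\<^sup>2 * \<omega> n + (cmod (g n))\<^sup>2 * \<omega> n)"
    using assms(2,3) unfolding in_H2_def by (rule summable_add)
  ultimately show "summable (\<lambda>n. norm (f n * cnj (g n) * complex_of_real (\<omega> n)))"
    by (blast intro: summable_comparison_test')
qed

lemma winner_diff_left:
  assumes "\<And>n. \<omega> n \<ge> 0" and "in_H2 \<omega> f" and "in_H2 \<omega> g" and "in_H2 \<omega> u"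
  shows "winner \<omega> (\<lambda>n. c * f n - g n) u = c * winner \<omega> f u - winner \<omega> g u"
  using suminf_diff[OF summable_mult[OF summable_winner[OF assms(1,2,4)], of c] summable_winner[OF assms(1,3,4)]]
  unfolding winner_def suminf_mult[OF summable_winner[OF assms(1,2,4)], symmetric]
  by (simp add: algebra_simps)

lemma winner_diff_right:
  assumes "\<And>n. \<omega> n \<ge> 0" and "in_H2 \<omega> f" and "in_H2 \<omega> u" and "in_H2 \<omega> v"
  shows "winner \<omega> f (\<lambda>n. c * u n - v n) = cnj c * winner \<omega> f u - winner \<omega> f v"
  using suminf_diff[OF summable_mult[OF summable_winner[OF assms(1,2,3)], of "cnj c"] summable_winner[OF assms(1,2,4)]]
  unfolding winner_def suminf_mult[OF summable_winner[OF assms(1,2,3)], symmetric]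
  by (simp add: algebra_simps)

lemma winner_mult_z:
  assumes "\<And>n. \<omega> n \<noteq> 0"
  shows "winner \<omega> (mult_z f) u = winner \<omega> f (mult_z_adj \<omega> u)"
proof -
  let ?t = "\<lambda>n. mult_z f n * cnj (u n) * complex_of_real (\<omega> n)"
  have "(sums) (\<lambda>n. ?t (Suc n)) = (sums) ?t"
  proof
    fix s
    show "(\<lambda>n. ?t (Suc n)) sums s = ?t sums s"
      using sums_Suc_iff[of ?t s] by (simp add: mult_z_def)
  qed
  then have "(\<Sum>n. ?t n) = (\<Sum>n. ?t (Suc n))"
    unfolding suminf_def by simp
  also have "(\<lambda>n. ?t (Suc n)) = (\<lambda>n. f n * cnj (mult_z_adj \<omega> u n) * complex_of_real (\<omega> n))"
    using assms by (auto simp: mult_z_def mult_z_adj_def field_simps)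
  finally show ?thesis
    unfolding winner_def .
qed

lemma in_H2_unit_vector: "in_H2 \<omega> (\<lambda>m. if m = n then 1 else 0)"
proof -
  have "(\<lambda>m. (cmod (if m = n then 1 else 0 :: complex))\<^sup>2 * \<omega> m) = (\<lambda>m. if m = n then \<omega> n else 0)"
    by auto
  then show ?thesis
    unfolding in_H2_def by (simp add: summable_single)
qed

lemma winner_unit_vector: "winner \<omega> (\<lambda>m. if m = n then 1 else 0) v = cnj (v n) * complex_of_real (\<omega> n)"
proof -
  have "(\<lambda>m. (if m = n then 1 else 0) * cnj (v m) * complex_of_real (\<omega> m))
      = (\<lambda>m. if m = n then cnj (v n) * complex_of_real (\<omega> n) else 0)"
    by auto
  then show ?thesis
    unfolding winner_def using sums_single[of n "\<lambda>_. cnj (v n) * complex_of_real (\<omega> n)"]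
    by (simp add: sums_iff)
qed

lemma mult_az_adj_eqI:
  assumes "\<And>n. \<omega> n \<noteq> 0" and "in_H2 \<omega> v"
    and adj: "\<And>f. in_H2 \<omega> f \<Longrightarrow> winner \<omega> (mult_az a f) u = winner \<omega> f v"
  shows "mult_az_adj \<omega> a u = v"
  unfolding mult_az_adj_def
proof (rule the_equality)
  fix v'
  assume v': "in_H2 \<omega> v' \<and> (\<forall>f. in_H2 \<omega> f \<longrightarrow> winner \<omega> (mult_az a f) u = winner \<omega> f v')"
  show "v' = v"
  proof
    fix n
    have "winner \<omega> (\<lambda>m. if m = n then 1 else 0) v' = winner \<omega> (\<lambda>m. if m = n then 1 else 0) v"
      using v' adj in_H2_unit_vector by metis
    then show "v' n = v n"
      using assms(1)[of n] by (simp add: winner_unit_vector)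
  qed
qed (use assms in blast)

lemma eig_rec_iff:
  "eig_rec \<omega> a lam h n \<longleftrightarrow> cnj a * mult_az a h n - mult_z_adj \<omega> (mult_az a h) n = lam * h n"
proof -
  have "cnj a * mult_az a h n - mult_z_adj \<omega> (mult_az a h) n
      = complex_of_real ((cmod a)\<^sup>2) * h n - a * h (Suc n) * complex_of_real (\<omega> (Suc n) / \<omega> n)
        - cnj a * mult_z h n + h n * complex_of_real (\<omega> (Suc n) / \<omega> n)"
    unfolding complex_norm_square mult_az_eq mult_z_adj_def by (simp add: mult_z_def algebra_simps del: of_real_divide)
  then show ?thesis
    by (simp add: eig_rec_def mult_z_def del: of_real_divide)
qed

lemma eig_rec_iff_next:
  "eig_rec \<omega> a lam h n \<longleftrightarrow>
     a * h (Suc n) * complex_of_real (\<omega> (Suc n) / \<omega> n)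
       = (complex_of_real ((cmod a)\<^sup>2 + \<omega> (Suc n) / \<omega> n) - lam) * h n - cnj a * mult_z h n"
  unfolding eig_rec_def mult_z_def by (auto simp: algebra_simps simp del: of_real_divide)

lemma eig_rec_diff:
  assumes "eig_rec \<omega> a lam k n" and "eig_rec \<omega> a lam g n"
  shows "eig_rec \<omega> a lam (\<lambda>m. k m - c * g m) n"
proof -
  let ?r = "complex_of_real (\<omega> (Suc n) / \<omega> n)"
  let ?b = "complex_of_real ((cmod a)\<^sup>2 + \<omega> (Suc n) / \<omega> n) - lam"
  have "a * (k (Suc n) - c * g (Suc n)) * ?r = a * k (Suc n) * ?r - c * (a * g (Suc n) * ?r)"
    by (simp add: algebra_simps del: of_real_divide of_real_add)
  also have "\<dots> = ?b * k n - cnj a * mult_z k n - c * (?b * g n - cnj a * mult_z g n)"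
    using assms by (simp only: eig_rec_iff_next)
  also have "\<dots> = ?b * (k n - c * g n) - cnj a * mult_z (\<lambda>m. k m - c * g m) n"
    by (simp add: mult_z_def algebra_simps del: of_real_divide of_real_add)
  finally show ?thesis
    by (simp only: eig_rec_iff_next)
qed

lemma eig_rec_zero_start:
  assumes "\<And>n. \<omega> n \<noteq> 0" and "a \<noteq> 0" and rec: "\<forall>n. eig_rec \<omega> a lam h n" and "h 0 = 0"
  shows "h = (\<lambda>_. 0)"
proof -
  have step: "h (Suc n) = 0" if "h n = 0" and "mult_z h n = 0" for n
  proof -
    have "a * h (Suc n) * complex_of_real (\<omega> (Suc n) / \<omega> n) = 0"
      using rec that by (simp only: eig_rec_iff_next) simp
    then show ?thesis
      using assms(1,2) by simp
  qed
  have "h n = 0 \<and> h (Suc n) = 0" for n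
    by (induction n) (use assms(4) step in \<open>auto simp: mult_z_def\<close>)
  then show ?thesis
    by auto
qed

lemma eig_rec_unique:
  assumes "\<And>n. \<omega> n \<noteq> 0" and "a \<noteq> 0"
    and "\<forall>n. eig_rec \<omega> a lam h n" and "\<forall>n. eig_rec \<omega> a lam k n" and "h 0 \<noteq> 0"
  shows "k = (\<lambda>n. k 0 / h 0 * h n)"
proof -
  have diff_zero: "(\<lambda>n. k n - k 0 / h 0 * h n) = (\<lambda>_. 0)"
  proof (rule eig_rec_zero_start[OF assms(1,2)])
    show "\<forall>n. eig_rec \<omega> a lam (\<lambda>m. k m - k 0 / h 0 * h m) n"
      using assms(3,4) eig_rec_diff[of \<omega> a lam k _ h "k 0 / h 0"] by blast
    show "k 0 - k 0 / h 0 * h 0 = 0"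
      using assms(5) by simp
  qed
  show ?thesis
  proof
    fix n
    from fun_cong[OF diff_zero, of n] show "k n = k 0 / h 0 * h n"
      by (simp only: right_minus_eq)
  qed
qed

locale bounded_ratio_weight =
  fixes \<omega> :: "nat \<Rightarrow> real"
  assumes weight_pos: "\<omega> n > 0"
    and ratio_bdd_above: "bdd_above (range (\<lambda>n. \<omega> (Suc n) / \<omega> n))"
begin

lemma weight_nonneg: "\<omega> n \<ge> 0"
  using weight_pos[of n] by simp

lemma weight_nonzero: "\<omega> n \<noteq> 0"
  using weight_pos[of n] by simp

lemma ratio_boundE: obtains C where "\<And>n. \<omega> (Suc n) / \<omega> n \<le> C"
  using ratio_bdd_above that unfolding bdd_above_def by blast

lemma in_H2_mult_z:
  assumes "in_H2 \<omega> f"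
  shows "in_H2 \<omega> (mult_z f)"
proof -
  obtain C where C: "\<And>n. \<omega> (Suc n) / \<omega> n \<le> C"
    using ratio_boundE by blast
  have "norm ((cmod (f n))\<^sup>2 * \<omega> (Suc n)) \<le> C * ((cmod (f n))\<^sup>2 * \<omega> n)" for n
  proof -
    have "\<omega> (Suc n) \<le> C * \<omega> n"
      using C[of n] weight_pos[of n] by (simp add: divide_le_eq)
    from mult_left_mono[OF this, of "(cmod (f n))\<^sup>2"] show ?thesis
      using weight_nonneg[of "Suc n"] by (simp add: algebra_simps)
  qed
  moreover have "summable (\<lambda>n. C * ((cmod (f n))\<^sup>2 * \<omega> n))"
    using assms unfolding in_H2_def by (rule summable_mult)
  ultimately have "summable (\<lambda>n. (cmod (f n))\<^sup>2 * \<omega> (Suc n))"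
    by (blast intro: summable_comparison_test')
  then show ?thesis
    unfolding in_H2_def by (subst summable_Suc_iff[symmetric]) (simp add: mult_z_def)
qed

lemma in_H2_mult_z_adj:
  assumes "in_H2 \<omega> u"
  shows "in_H2 \<omega> (mult_z_adj \<omega> u)"
proof -
  obtain C where C: "\<And>n. \<omega> (Suc n) / \<omega> n \<le> C"
    using ratio_boundE by blast
  have "(cmod (mult_z_adj \<omega> u n))\<^sup>2 * \<omega> n = ((cmod (u (Suc n)))\<^sup>2 * \<omega> (Suc n)) * (\<omega> (Suc n) / \<omega> n)" for n
  proof -
    have norm_eq: "cmod (mult_z_adj \<omega> u n) = cmod (u (Suc n)) * (\<omega> (Suc n) / \<omega> n)"
      using weight_pos[of n] weight_pos[of "Suc n"] by (simp add: mult_z_adj_def norm_mult del: of_real_divide)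
    show ?thesis
      unfolding norm_eq using weight_nonzero[of n] by (simp add: power2_eq_square field_simps)
  qed
  also have "\<dots> n \<le> C * ((cmod (u (Suc n)))\<^sup>2 * \<omega> (Suc n))" for n
  proof -
    have "0 \<le> (cmod (u (Suc n)))\<^sup>2 * \<omega> (Suc n)"
      using weight_nonneg[of "Suc n"] by simp
    from mult_left_mono[OF C[of n] this] show ?thesis
      by (metis mult.commute)
  qed
  finally have "norm ((cmod (mult_z_adj \<omega> u n))\<^sup>2 * \<omega> n) \<le> C * ((cmod (u (Suc n)))\<^sup>2 * \<omega> (Suc n))" for n
    using weight_nonneg[of n] by simp
  moreover have "summable (\<lambda>n. C * ((cmod (u (Suc n)))\<^sup>2 * \<omega> (Suc n)))"
    using assms unfolding in_H2_def by (intro summable_mult) (subst summable_Suc_iff)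
  ultimately show ?thesis
    unfolding in_H2_def by (blast intro: summable_comparison_test')
qed

lemma in_H2_mult_az:
  assumes "in_H2 \<omega> h"
  shows "in_H2 \<omega> (mult_az a h)"
  unfolding mult_az_eq using assms by (intro in_H2_diff weight_nonneg in_H2_cmult in_H2_mult_z)

lemma mult_az_adj_eq:
  assumes "in_H2 \<omega> u"
  shows "mult_az_adj \<omega> a u = (\<lambda>n. cnj a * u n - mult_z_adj \<omega> u n)"
proof (rule mult_az_adj_eqI[OF weight_nonzero])
  show "in_H2 \<omega> (\<lambda>n. cnj a * u n - mult_z_adj \<omega> u n)"
    using assms by (intro in_H2_diff weight_nonneg in_H2_cmult in_H2_mult_z_adj)
  fix f
  assume f: "in_H2 \<omega> f"
  have "winner \<omega> (mult_az a f) u = a * winner \<omega> f u - winner \<omega> (mult_z f) u"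
    unfolding mult_az_eq using f assms by (intro winner_diff_left weight_nonneg in_H2_mult_z)
  also have "\<dots> = a * winner \<omega> f u - winner \<omega> f (mult_z_adj \<omega> u)"
    by (simp add: winner_mult_z weight_nonzero)
  also have "\<dots> = winner \<omega> f (\<lambda>n. cnj a * u n - mult_z_adj \<omega> u n)"
    using f assms by (simp add: winner_diff_right weight_nonneg in_H2_mult_z_adj)
  finally show "winner \<omega> (mult_az a f) u = winner \<omega> f (\<lambda>n. cnj a * u n - mult_z_adj \<omega> u n)" .
qed

lemma V_op_eq:
  assumes "in_H2 \<omega> h"
  shows "V_op \<omega> a h = (\<lambda>n. cnj a * mult_az a h n - mult_z_adj \<omega> (mult_az a h) n)"
  unfolding V_op_def using assms by (intro mult_az_adj_eq in_H2_mult_az)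

lemma V_op_eigenvector_iff_eig_rec:
  assumes "in_H2 \<omega> h"
  shows "V_op \<omega> a h = (\<lambda>n. lam * h n) \<longleftrightarrow> (\<forall>n. eig_rec \<omega> a lam h n)"
  by (simp add: V_op_eq[OF assms] eig_rec_iff fun_eq_iff)

end

lemma valid_weight_imp_bounded_ratio_weight:
  assumes "valid_weight \<omega>"
  shows "bounded_ratio_weight \<omega>"
proof
  show "\<omega> n > 0" for n
    using assms by (simp add: valid_weight_def)
  have "(\<lambda>n. \<omega> (Suc n) / \<omega> n) \<longlonglongrightarrow> 1"
    using assms by (simp add: valid_weight_def)
  then show "bdd_above (range (\<lambda>n. \<omega> (Suc n) / \<omega> n))"
    by (intro Bseq_bdd_above convergent_imp_Bseq convergentI)
qed

theorem lemma3p1: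
  fixes \<omega> :: "nat \<Rightarrow> real" and a lam :: complex and h :: "nat \<Rightarrow> complex"
  assumes "valid_weight \<omega>" and "a \<noteq> 0"
    and "lam \<in> point_spectrum_V \<omega> a"
    and "in_H2 \<omega> h" and "h \<noteq> (\<lambda>_. 0)" and "V_op \<omega> a h = (\<lambda>n. lam * h n)"
  shows "(\<forall>n. eig_rec \<omega> a lam h n) \<and>
         (\<forall>k. (\<forall>n. eig_rec \<omega> a lam k n) \<longrightarrow> (\<exists>c. k = (\<lambda>n. c * h n)))"
proof -
  interpret bounded_ratio_weight \<omega>
    using assms(1) by (rule valid_weight_imp_bounded_ratio_weight)
  have rec: "\<forall>n. eig_rec \<omega> a lam h n"
    using V_op_eigenvector_iff_eig_rec[OF assms(4)] assms(6) by blast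
  have "h 0 \<noteq> 0"
    using eig_rec_zero_start[OF weight_nonzero assms(2) rec] assms(5) by blast
  then have "\<exists>c. k = (\<lambda>n. c * h n)" if "\<forall>n. eig_rec \<omega> a lam k n" for k
    using eig_rec_unique[OF weight_nonzero assms(2) rec that] by blast
  with rec show ?thesis
    by blast
qed

end
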